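(* Let $X\in\mathbb R^{n\times p}$ be fixed, let $\mathbf y\in\mathbb R^n$ be a random vector with independent components satisfying, for some $\sigma\ge0$, $\mathbb E\,e^{t(\mathbf y_i-\mathbb E\mathbf y_i)}\le e^{\sigma^2t^2/2}$ for all $i$ and all $t\in\mathbb R$, and let $\hat Q(\beta)=\|X\beta-\mathbf y\|_2^2$. Let $\mathrm{cl}$ be a coding length with coding complexity $c(\cdot)$. For $\lambda>0$ let $\hat\beta_{pen}$ be a minimizer over $\beta\in\mathbb R^p$ of $\hat Q(\beta)+\lambda c(\beta)$. Fix a target $\bar\beta\in\mathbb R^p$ and $\eta\in(0,1)$. Then with probability exceeding $1-\eta$, for all $\lambda>7.4\sigma^2$ and all $a\ge 7.4\sigma^2/(\lambda-7.4\sigma^2)$, \[ \|X\hat\beta_{pen}-\mathbb E\mathbf y\|_2^2\le(1+a)^2\|X\bar\beta-\mathbb E\mathbf y\|_2^2+(1+a)\lambda c(\bar\beta)+\sigma^2(10+5a+7a^{-1})\ln(6/\eta). \]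
   Context: Let $\mathcal I=\{1,\ldots,p\}$ and $\mathrm{supp}(\beta)=\{j:\beta_j\ne0\}$. A function $\mathrm{cl}$ from subsets of $\mathcal I$ to $[0,\infty]$ is a coding length if $\sum_{F\subset\mathcal I,\,F\ne\emptyset}2^{-\mathrm{cl}(F)}\le1$, with $\mathrm{cl}(\emptyset)=0$. The coding complexity is $c(F)=|F|+\mathrm{cl}(F)$ for $F\subset\mathcal I$, and $c(\beta)=\min\{c(F):\mathrm{supp}(\beta)\subset F\}$ for $\beta\in\mathbb R^p$. *)

theory Defs
  imports "HOL-Probability.Probability"
begin

definition supp :: "real^'p \<Rightarrow> 'p set" where
  "supp \<beta> = {j. \<beta> $ j \<noteq> 0}"

text \<open>Coding length: values in [0,\<infinity>] (as ereal), cl {} = 0, Kraft inequality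
  over nonempty subsets (terms with cl F = \<infinity> contribute 2^(-\<infinity>) = 0).\<close>
definition coding_length :: "('p::finite set \<Rightarrow> ereal) \<Rightarrow> bool" where
  "coding_length cl \<longleftrightarrow> (\<forall>F. 0 \<le> cl F) \<and> cl {} = 0 \<and>
     (\<Sum>F\<in>{F. F \<noteq> {} \<and> cl F \<noteq> \<infinity>}. (2::real) powr (- real_of_ereal (cl F))) \<le> 1"

definition cc_set :: "('p::finite set \<Rightarrow> ereal) \<Rightarrow> 'p set \<Rightarrow> ereal" where
  "cc_set cl F = ereal (real (card F)) + cl F"

definition cc :: "('p::finite set \<Rightarrow> ereal) \<Rightarrow> real^'p \<Rightarrow> ereal" where
  "cc cl \<beta> = Min {cc_set cl F | F. supp \<beta> \<subseteq> F}"

definition Qhat :: "real^'p^'n \<Rightarrow> real^'n \<Rightarrow> real^'p \<Rightarrow> real" where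
  "Qhat X y \<beta> = (norm (X *v \<beta> - y))\<^sup>2"

end

theory Submission
  imports Defs
begin

text \<open>Comparing the penalized estimator with \<open>\<beta>bar\<close> gives a basic inequality in which the
  noise \<open>v = y - E y\<close> enters only through \<open>v \<bullet> (X \<beta>pen - E y)\<close> and \<open>v \<bullet> (X \<beta>bar - E y)\<close>.
  If \<open>F\<close> is a support attaining \<open>c(\<beta>pen)\<close>, the first vector lies in the span of \<open>E y\<close> and the
  columns of \<open>X\<close> indexed by \<open>F\<close>, so by Cauchy-Schwarz it is controlled by the squared norm of
  the projection of \<open>v\<close> onto that span of dimension at most \<open>|F| + 1\<close>. For a sub-Gaussian
  vector this projected norm exceeds \<open>\<sigma>\<^sup>2 x\<close> with probability at most \<open>sqrt 3 ^ dim * exp (- x / 3)\<close>,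
  which follows from a Chernoff bound after linearising \<open>exp (s z\<^sup>2)\<close> with an auxiliary Gaussian.
  Taking \<open>x = 7.4 c(F) + 3.5 ln (6 / \<eta>)\<close>, the failure probabilities are summable over all
  supports by Kraft's inequality for the coding length, so with probability \<open>1 - \<eta>\<close> the bound
  holds for all \<open>F\<close> at once; AM-GM with weight \<open>a / (1 + a)\<close> then absorbs the cross terms.\<close>

abbreviation std_normal :: "real measure" where
  "std_normal \<equiv> density lborel (\<lambda>x. ennreal (std_normal_density x))"

lemma nn_integral_normal_density:
  "0 < s \<Longrightarrow> (\<integral>\<^sup>+x. ennreal (normal_density \<mu> s x) \<partial>lborel) = 1"
  by (subst nn_integral_eq_integral) auto

lemma prob_space_std_normal: "prob_space std_normal"
  using prob_space_normal_density[of 1 0] by simp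

lemma nn_integral_std_normal_exp_linear:
  "(\<integral>\<^sup>+x. ennreal (exp (c * x)) \<partial>std_normal) = ennreal (exp (c\<^sup>2 / 2))"
proof -
  have "std_normal_density x * exp (c * x) = exp (c\<^sup>2 / 2) * normal_density c 1 x" for x
    by (simp add: normal_density_def mult_exp_exp power2_eq_square algebra_simps
        add_divide_distrib[symmetric])
  then have "(\<integral>\<^sup>+x. ennreal (exp (c * x)) \<partial>std_normal)
      = (\<integral>\<^sup>+x. ennreal (exp (c\<^sup>2 / 2)) * ennreal (normal_density c 1 x) \<partial>lborel)"
    by (subst nn_integral_density) (auto simp flip: ennreal_mult')
  also have "\<dots> = ennreal (exp (c\<^sup>2 / 2))"
    by (simp add: nn_integral_cmult nn_integral_normal_density)
  finally show ?thesis .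
qed

lemma nn_integral_std_normal_exp_square:
  assumes "k < 1 / 2"
  shows "(\<integral>\<^sup>+x. ennreal (exp (k * x\<^sup>2)) \<partial>std_normal) = ennreal (1 / sqrt (1 - 2 * k))"
proof -
  define s where "s = 1 / sqrt (1 - 2 * k)"
  have k: "0 < 1 - 2 * k" using assms by simp
  then have s: "0 < s" "s\<^sup>2 = 1 / (1 - 2 * k)"
    by (simp_all add: s_def power_divide)
  have "std_normal_density x * exp (k * x\<^sup>2) = s * normal_density 0 s x" for x
  proof -
    have "x\<^sup>2 / (2 * s\<^sup>2) = x\<^sup>2 / 2 - k * x\<^sup>2"
      using k by (simp add: s(2) field_simps)
    then show ?thesis
      using s(1) by (simp add: normal_density_def std_normal_density_def real_sqrt_mult
          mult_exp_exp algebra_simps)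
  qed
  then have "(\<integral>\<^sup>+x. ennreal (exp (k * x\<^sup>2)) \<partial>std_normal)
      = (\<integral>\<^sup>+x. ennreal s * ennreal (normal_density 0 s x) \<partial>lborel)"
    using s by (subst nn_integral_density) (auto simp flip: ennreal_mult')
  also have "\<dots> = ennreal s"
    using s by (simp add: nn_integral_cmult nn_integral_normal_density)
  finally show ?thesis by (simp add: s_def)
qed

definition orthonormal_basis_of :: "'a::euclidean_space set \<Rightarrow> 'a set" where
  "orthonormal_basis_of G = (SOME B. pairwise orthogonal B \<and> (\<forall>b\<in>B. norm b = 1) \<and>
     independent B \<and> card B = dim (span G) \<and> span B = span G)"

lemma
  fixes G :: "'a::euclidean_space set"
  shows orthonormal_basis_of_orthogonal: "pairwise orthogonal (orthonormal_basis_of G)"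
    and orthonormal_basis_of_norm: "b \<in> orthonormal_basis_of G \<Longrightarrow> norm b = 1"
    and finite_orthonormal_basis_of: "finite (orthonormal_basis_of G)"
    and card_orthonormal_basis_of: "card (orthonormal_basis_of G) = dim (span G)"
    and span_orthonormal_basis_of: "span (orthonormal_basis_of G) = span G"
proof -
  have "\<exists>B. pairwise orthogonal B \<and> (\<forall>b\<in>B. norm b = 1) \<and>
     independent B \<and> card B = dim (span G) \<and> span B = span G"
    using orthonormal_basis_subspace[OF subspace_span, of G] by metis
  then have "pairwise orthogonal (orthonormal_basis_of G) \<and> (\<forall>b\<in>orthonormal_basis_of G. norm b = 1) \<and>
     independent (orthonormal_basis_of G) \<and> card (orthonormal_basis_of G) = dim (span G) \<and>
     span (orthonormal_basis_of G) = span G"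
    unfolding orthonormal_basis_of_def by (rule someI_ex)
  then show "pairwise orthogonal (orthonormal_basis_of G)"
    and "b \<in> orthonormal_basis_of G \<Longrightarrow> norm b = 1"
    and "finite (orthonormal_basis_of G)"
    and "card (orthonormal_basis_of G) = dim (span G)"
    and "span (orthonormal_basis_of G) = span G"
    by (auto simp: finiteI_independent)
qed

lemma norm_sum_orthonormal_sq:
  fixes B :: "'a::real_inner set"
  assumes "finite B" "pairwise orthogonal B" "\<And>b. b \<in> B \<Longrightarrow> norm b = 1"
  shows "(norm (\<Sum>b\<in>B. g b *\<^sub>R b))\<^sup>2 = (\<Sum>b\<in>B. (g b)\<^sup>2)"
proof -
  have "(norm (\<Sum>b\<in>B. g b *\<^sub>R b))\<^sup>2 = (\<Sum>b\<in>B. (norm (g b *\<^sub>R b))\<^sup>2)"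
    using assms(2) by (intro norm_sum_Pythagorean[OF assms(1)])
      (auto simp: pairwise_def orthogonal_clauses)
  then show ?thesis by (simp add: assms(3) power_mult_distrib)
qed

text \<open>The squared norm of the orthogonal projection of \<open>v\<close> onto \<open>span G\<close>; the choice of the
  orthonormal basis is immaterial.\<close>
definition proj_norm_sq :: "'a::euclidean_space set \<Rightarrow> 'a \<Rightarrow> real" where
  "proj_norm_sq G v = (\<Sum>b\<in>orthonormal_basis_of G. (v \<bullet> b)\<^sup>2)"

lemma proj_norm_sq_nonneg: "0 \<le> proj_norm_sq G v"
  by (simp add: proj_norm_sq_def sum_nonneg)

lemma inner_sq_le_proj_norm_sq:
  fixes v w :: "'a::euclidean_space"
  assumes "w \<in> span G"
  shows "(v \<bullet> w)\<^sup>2 \<le> (norm w)\<^sup>2 * proj_norm_sq G v"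
proof -
  let ?B = "orthonormal_basis_of G"
  have w: "w \<in> span ?B" using assms by (simp add: span_orthonormal_basis_of)
  have w_expand: "(\<Sum>b\<in>?B. (w \<bullet> b) *\<^sub>R b) = w"
    by (rule orthonormal_basis_expand[OF orthonormal_basis_of_orthogonal
          orthonormal_basis_of_norm w finite_orthonormal_basis_of])
  have "v \<bullet> w = (\<Sum>b\<in>?B. (w \<bullet> b) * (v \<bullet> b))"
    by (subst w_expand[symmetric]) (simp add: inner_sum_right)
  then have "(v \<bullet> w)\<^sup>2 \<le> (\<Sum>b\<in>?B. (w \<bullet> b)\<^sup>2) * proj_norm_sq G v"
    by (simp add: proj_norm_sq_def Cauchy_Schwarz_ineq_sum)
  also have "(\<Sum>b\<in>?B. (w \<bullet> b)\<^sup>2) = (norm (\<Sum>b\<in>?B. (w \<bullet> b) *\<^sub>R b))\<^sup>2"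
    by (rule norm_sum_orthonormal_sq[symmetric])
      (simp_all add: finite_orthonormal_basis_of orthonormal_basis_of_orthogonal
        orthonormal_basis_of_norm)
  finally show ?thesis by (simp add: w_expand)
qed

lemma sqrt_3_less_2: "sqrt 3 < (2::real)"
  by (rule real_less_lsqrt) auto

text \<open>The constant \<open>7.4\<close> makes \<open>3 exp (- 7.4 / 3) \<le> 1\<close> and \<open>exp (- 7.4 r / 3) \<le> 2 powr (- r)\<close>:
  each element of a support pays for the factor \<open>sqrt 3\<close> of one more dimension, and each bit of
  code length for its Kraft weight.\<close>
lemma tail_weight_le:
  fixes r L :: real and k :: nat
  assumes r: "0 \<le> r" and L: "0 \<le> L"
  shows "sqrt 3 ^ (k + 1) * exp (- (7.4 * (real k + r) + 3.5 * L) / 3)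
     \<le> exp (- L) * (if k = 0 then sqrt 3 else 2 powr (- r))"
proof -
  define q where "q = exp (- (7.4::real) / 3)"
  have q: "0 < q" "3 * q \<le> 1"
    using exp_ge_add_one_self[of "7.4 / 3"] by (simp_all add: q_def exp_minus field_simps)
  have split_exp: "exp (- (7.4 * (real k + r) + 3.5 * L) / 3)
      = q ^ k * exp (- 7.4 * r / 3) * exp (- 3.5 * L / 3)"
  proof -
    have "- (7.4 * (real k + r) + 3.5 * L) / 3 = real k * (- 7.4 / 3) + - 7.4 * r / 3 + - 3.5 * L / 3"
      by (simp add: field_simps)
    then show ?thesis
      by (simp add: q_def exp_of_nat_mult[symmetric] exp_add[symmetric])
  qed
  have exp_r: "exp (- 7.4 * r / 3) \<le> 2 powr (- r)"
  proof -
    have "r * ln 2 \<le> r * (7.4 / 3)"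
      using ln_2_less_1 r by (intro mult_left_mono) simp_all
    then show ?thesis by (simp add: powr_def)
  qed
  have geometric: "sqrt 3 ^ (k + 1) * q ^ k \<le> (if k = 0 then sqrt 3 else 1)"
  proof (cases "k = 0")
    case False
    have "sqrt 3 * q \<le> 3 * q"
      using q(1) sqrt_3_less_2 by (intro mult_right_mono) auto
    then have "sqrt 3 * q \<le> 1"
      using q(2) by linarith
    then have "(sqrt 3 * q) ^ k \<le> (sqrt 3 * q) ^ 1"
      using False q by (intro power_decreasing) auto
    then have "sqrt 3 ^ (k + 1) * q ^ k \<le> sqrt 3 * (sqrt 3 * q)"
      by (simp add: power_mult_distrib)
    then show ?thesis
      using False q(2) by (simp add: mult.assoc[symmetric])
  qed simp
  have "sqrt 3 ^ (k + 1) * exp (- (7.4 * (real k + r) + 3.5 * L) / 3)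
      = (sqrt 3 ^ (k + 1) * q ^ k) * exp (- 7.4 * r / 3) * exp (- 3.5 * L / 3)"
    unfolding split_exp by (simp add: mult_ac)
  also have "\<dots> \<le> (if k = 0 then sqrt 3 else 1) * exp (- 7.4 * r / 3) * exp (- L)"
    using geometric L by (intro mult_mono) auto
  also have "\<dots> \<le> (if k = 0 then sqrt 3 else 2 powr (- r)) * exp (- L)"
    using exp_r r by (intro mult_right_mono) auto
  finally show ?thesis by (simp add: mult_ac)
qed

lemma sum_coding_weights_le:
  fixes cl :: "'p::finite set \<Rightarrow> ereal"
  assumes "coding_length cl"
  shows "(\<Sum>F\<in>{F. cl F \<noteq> \<infinity>}. if card F = 0 then sqrt 3 else 2 powr (- real_of_ereal (cl F)))
    \<le> sqrt 3 + 1"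
proof -
  have empty: "{} \<in> {F. cl F \<noteq> \<infinity>}" using assms by (simp add: coding_length_def)
  have "(\<Sum>F\<in>{F. cl F \<noteq> \<infinity>} - {{}}. if card F = 0 then sqrt 3 else 2 powr (- real_of_ereal (cl F)))
      = (\<Sum>F\<in>{F. F \<noteq> {} \<and> cl F \<noteq> \<infinity>}. (2::real) powr (- real_of_ereal (cl F)))"
    by (intro sum.cong) auto
  also have "\<dots> \<le> 1"
    using assms by (simp add: coding_length_def)
  finally show ?thesis
    by (simp add: sum.remove[OF _ empty])
qed

lemma (in prob_space) AE_eq_0_if_nn_integral_exp_le_1:
  assumes [measurable]: "Z \<in> borel_measurable M" and Z: "\<And>\<omega>. 0 \<le> Z \<omega>"
    and mgf: "(\<integral>\<^sup>+\<omega>. ennreal (exp (Z \<omega>)) \<partial>M) \<le> 1"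
  shows "AE \<omega> in M. Z \<omega> = 0"
proof -
  have "1 + ennreal (Z \<omega>) \<le> ennreal (exp (Z \<omega>))" for \<omega>
    using Z[of \<omega>]
    by (metis ennreal_1 ennreal_leI ennreal_plus exp_ge_add_one_self zero_le_one)
  then have "(\<integral>\<^sup>+\<omega>. 1 + ennreal (Z \<omega>) \<partial>M) \<le> (\<integral>\<^sup>+\<omega>. ennreal (exp (Z \<omega>)) \<partial>M)"
    by (simp add: nn_integral_mono)
  also note mgf
  finally have "(\<integral>\<^sup>+\<omega>. 1 + ennreal (Z \<omega>) \<partial>M) \<le> 1 + 0"
    by simp
  then have "1 + (\<integral>\<^sup>+\<omega>. ennreal (Z \<omega>) \<partial>M) \<le> 1 + 0"
    by (subst (asm) nn_integral_add) (auto simp: emeasure_space_1)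
  then have "(\<integral>\<^sup>+\<omega>. ennreal (Z \<omega>) \<partial>M) = 0"
    by (subst (asm) ennreal_add_left_cancel_le) auto
  then show ?thesis
    using Z by (subst (asm) nn_integral_0_iff_AE) auto
qed

locale subgaussian_vector = prob_space M for M :: "'a measure" +
  fixes y :: "'a \<Rightarrow> real^'n::finite" and \<sigma> :: real
  assumes indep: "indep_vars (\<lambda>_. borel) (\<lambda>i \<omega>. y \<omega> $ i) UNIV"
    and integrable_y: "\<And>i. integrable M (\<lambda>\<omega>. y \<omega> $ i)"
    and integrable_mgf: "\<And>i t. integrable M
          (\<lambda>\<omega>. exp (t * (y \<omega> $ i - expectation (\<lambda>\<omega>'. y \<omega>' $ i))))"
    and subgaussian: "\<And>i t. expectation
          (\<lambda>\<omega>. exp (t * (y \<omega> $ i - expectation (\<lambda>\<omega>'. y \<omega>' $ i))))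
          \<le> exp (\<sigma>\<^sup>2 * t\<^sup>2 / 2)"
begin

definition mean :: "real^'n" where
  "mean = (\<chi> i. expectation (\<lambda>\<omega>. y \<omega> $ i))"

definition noise :: "'a \<Rightarrow> real^'n" where
  "noise \<omega> = y \<omega> - mean"

lemma noise_component: "noise \<omega> $ i = y \<omega> $ i - expectation (\<lambda>\<omega>. y \<omega> $ i)"
  by (simp add: noise_def mean_def)

lemma borel_measurable_inner_noise[measurable]: "(\<lambda>\<omega>. noise \<omega> \<bullet> b) \<in> borel_measurable M"
proof -
  have [measurable]: "(\<lambda>\<omega>. y \<omega> $ i) \<in> borel_measurable M" for i
    using integrable_y by auto
  show ?thesis
    unfolding inner_vec_def noise_component by measurable
qed

lemma nn_integral_exp_inner_noise_le:
  "(\<integral>\<^sup>+\<omega>. ennreal (exp (t \<bullet> noise \<omega>)) \<partial>M) \<le> ennreal (exp (\<sigma>\<^sup>2 * (norm t)\<^sup>2 / 2))"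
proof -
  have "indep_vars (\<lambda>_. borel)
      (\<lambda>i \<omega>. (\<lambda>x. ennreal (exp (t $ i * (x - expectation (\<lambda>\<omega>. y \<omega> $ i))))) (y \<omega> $ i)) UNIV"
    by (rule indep_vars_compose2[OF indep]) measurable
  then have indep_factors: "indep_vars (\<lambda>_. borel) (\<lambda>i \<omega>. ennreal (exp (t $ i * noise \<omega> $ i))) UNIV"
    by (simp add: noise_component)
  have factor_le: "(\<integral>\<^sup>+\<omega>. ennreal (exp (t $ i * noise \<omega> $ i)) \<partial>M) \<le> ennreal (exp (\<sigma>\<^sup>2 * (t $ i)\<^sup>2 / 2))"
    for i
    using subgaussian[of "t $ i" i] integrable_mgf[of "t $ i" i]
    by (subst nn_integral_eq_integral) (auto simp: noise_component intro!: ennreal_leI)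
  have "(\<integral>\<^sup>+\<omega>. ennreal (exp (t \<bullet> noise \<omega>)) \<partial>M)
      = (\<integral>\<^sup>+\<omega>. (\<Prod>i\<in>UNIV. ennreal (exp (t $ i * noise \<omega> $ i))) \<partial>M)"
    by (simp add: inner_vec_def exp_sum prod_ennreal)
  also have "\<dots> = (\<Prod>i\<in>UNIV. \<integral>\<^sup>+\<omega>. ennreal (exp (t $ i * noise \<omega> $ i)) \<partial>M)"
    by (rule indep_vars_nn_integral[OF _ indep_factors]) auto
  also have "\<dots> \<le> (\<Prod>i\<in>UNIV. ennreal (exp (\<sigma>\<^sup>2 * (t $ i)\<^sup>2 / 2)))"
    by (rule prod_mono_ennreal) (rule factor_le)
  also have "\<dots> = ennreal (exp (\<sigma>\<^sup>2 * (\<Sum>i\<in>UNIV. (t $ i)\<^sup>2) / 2))"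
    by (simp add: prod_ennreal exp_sum[symmetric] sum_distrib_left sum_divide_distrib)
  also have "(\<Sum>i\<in>UNIV. (t $ i)\<^sup>2) = (norm t)\<^sup>2"
    unfolding power2_norm_eq_inner inner_vec_def by (simp add: power2_eq_square)
  finally show ?thesis .
qed

text \<open>Gaussian linearisation: \<open>exp (s z\<^sup>2) = E exp (sqrt (2 s) z g)\<close> for a standard normal \<open>g\<close>,
  so after Fubini the quadratic form becomes a linear one, controlled by the sub-Gaussian bound.\<close>
lemma nn_integral_exp_sum_inner_sq_noise_le:
  fixes B :: "(real^'n) set"
  assumes B: "finite B" "pairwise orthogonal B" "\<And>b. b \<in> B \<Longrightarrow> norm b = 1"
    and s: "0 \<le> s" "2 * \<sigma>\<^sup>2 * s < 1"
  shows "(\<integral>\<^sup>+\<omega>. ennreal (exp (s * (\<Sum>b\<in>B. (noise \<omega> \<bullet> b)\<^sup>2))) \<partial>M)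
     \<le> ennreal ((1 / sqrt (1 - 2 * (\<sigma>\<^sup>2 * s))) ^ card B)"
proof -
  interpret G: product_prob_space "\<lambda>_::real^'n. std_normal"
    by (simp add: product_prob_space_def product_prob_space_axioms_def prob_space_std_normal
        product_sigma_finite_def prob_space_imp_sigma_finite)
  define P where "P = PiM B (\<lambda>_. std_normal)"
  interpret P: prob_space P
    unfolding P_def by (rule prob_space_PiM) (rule prob_space_std_normal)
  interpret PM: pair_sigma_finite P M
    by (simp add: pair_sigma_finite_def P.sigma_finite_measure_axioms sigma_finite_measure_axioms)
  define c where "c = sqrt (2 * s)"
  have c2: "c\<^sup>2 = 2 * s" using s by (simp add: c_def)
  define H where "H \<omega> g = ennreal (exp (\<Sum>b\<in>B. c * g b * (noise \<omega> \<bullet> b)))" for \<omega> g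
  have H_measurable: "(\<lambda>(g, \<omega>). H \<omega> g) \<in> borel_measurable (P \<Otimes>\<^sub>M M)"
    unfolding H_def P_def by measurable
  have linearise: "ennreal (exp (s * (\<Sum>b\<in>B. (noise \<omega> \<bullet> b)\<^sup>2))) = (\<integral>\<^sup>+g. H \<omega> g \<partial>P)" for \<omega>
  proof -
    have "(\<integral>\<^sup>+g. H \<omega> g \<partial>P)
        = (\<integral>\<^sup>+g. (\<Prod>b\<in>B. (\<lambda>x. ennreal (exp ((c * (noise \<omega> \<bullet> b)) * x))) (g b)) \<partial>P)"
      unfolding H_def by (simp add: exp_sum[OF B(1)] prod_ennreal mult_ac)
    also have "\<dots> = (\<Prod>b\<in>B. \<integral>\<^sup>+x. ennreal (exp ((c * (noise \<omega> \<bullet> b)) * x)) \<partial>std_normal)"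
      unfolding P_def by (rule G.product_nn_integral_prod[OF B(1)]) measurable
    also have "\<dots> = ennreal (exp (s * (\<Sum>b\<in>B. (noise \<omega> \<bullet> b)\<^sup>2)))"
      by (simp add: nn_integral_std_normal_exp_linear power_mult_distrib c2 prod_ennreal
          exp_sum[OF B(1), symmetric] sum_distrib_left)
    finally show ?thesis by simp
  qed
  have H_le: "(\<integral>\<^sup>+\<omega>. H \<omega> g \<partial>M) \<le> ennreal (exp (\<sigma>\<^sup>2 * s * (\<Sum>b\<in>B. (g b)\<^sup>2)))" for g
  proof -
    define t where "t = (\<Sum>b\<in>B. (c * g b) *\<^sub>R b)"
    have "(\<Sum>b\<in>B. c * g b * (noise \<omega> \<bullet> b)) = t \<bullet> noise \<omega>" for \<omega>
      unfolding t_def inner_sum_left by (simp add: inner_commute)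
    then have "(\<integral>\<^sup>+\<omega>. H \<omega> g \<partial>M) \<le> ennreal (exp (\<sigma>\<^sup>2 * (norm t)\<^sup>2 / 2))"
      using nn_integral_exp_inner_noise_le by (simp add: H_def)
    also have "(norm t)\<^sup>2 = c\<^sup>2 * (\<Sum>b\<in>B. (g b)\<^sup>2)"
      unfolding t_def by (simp add: norm_sum_orthonormal_sq[OF B] power_mult_distrib sum_distrib_left)
    finally show ?thesis by (simp add: c2 mult.assoc)
  qed
  have "(\<integral>\<^sup>+\<omega>. ennreal (exp (s * (\<Sum>b\<in>B. (noise \<omega> \<bullet> b)\<^sup>2))) \<partial>M) = (\<integral>\<^sup>+g. \<integral>\<^sup>+\<omega>. H \<omega> g \<partial>M \<partial>P)"
    using PM.Fubini'[OF H_measurable] by (simp add: linearise)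
  also have "\<dots> \<le> (\<integral>\<^sup>+g. (\<Prod>b\<in>B. (\<lambda>x. ennreal (exp ((\<sigma>\<^sup>2 * s) * x\<^sup>2))) (g b)) \<partial>P)"
    using H_le by (intro nn_integral_mono) (simp add: exp_sum[OF B(1)] prod_ennreal sum_distrib_left)
  also have "\<dots> = (\<Prod>b\<in>B. \<integral>\<^sup>+x. ennreal (exp ((\<sigma>\<^sup>2 * s) * x\<^sup>2)) \<partial>std_normal)"
    unfolding P_def by (rule G.product_nn_integral_prod[OF B(1)]) measurable
  also have "\<dots> = ennreal ((1 / sqrt (1 - 2 * (\<sigma>\<^sup>2 * s))) ^ card B)"
    using nn_integral_std_normal_exp_square[of "\<sigma>\<^sup>2 * s"] s
    by (simp add: ennreal_power[symmetric])
  finally show ?thesis .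
qed

lemma borel_measurable_proj_norm_sq_noise[measurable]:
  "(\<lambda>\<omega>. proj_norm_sq G (noise \<omega>)) \<in> borel_measurable M"
  unfolding proj_norm_sq_def by measurable

lemma nn_integral_exp_proj_norm_sq_noise_le:
  assumes "0 \<le> s" "2 * \<sigma>\<^sup>2 * s < 1"
  shows "(\<integral>\<^sup>+\<omega>. ennreal (exp (s * proj_norm_sq G (noise \<omega>))) \<partial>M)
     \<le> ennreal ((1 / sqrt (1 - 2 * (\<sigma>\<^sup>2 * s))) ^ dim (span G))"
  unfolding proj_norm_sq_def card_orthonormal_basis_of[symmetric]
  by (rule nn_integral_exp_sum_inner_sq_noise_le[OF finite_orthonormal_basis_of
        orthonormal_basis_of_orthogonal orthonormal_basis_of_norm assms])

lemma prob_proj_norm_sq_noise_gt: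
  assumes "finite G" "0 \<le> x"
  shows "prob {\<omega>\<in>space M. \<sigma>\<^sup>2 * x < proj_norm_sq G (noise \<omega>)} \<le> sqrt 3 ^ card G * exp (- x / 3)"
proof (cases "\<sigma> = 0")
  case True
  \<comment> \<open>the Chernoff bound degenerates; instead the projection vanishes almost surely\<close>
  have "(\<integral>\<^sup>+\<omega>. ennreal (exp (1 * proj_norm_sq G (noise \<omega>))) \<partial>M) \<le> 1"
    using nn_integral_exp_proj_norm_sq_noise_le[of 1 G] True by simp
  then have "AE \<omega> in M. proj_norm_sq G (noise \<omega>) = 0"
    by (intro AE_eq_0_if_nn_integral_exp_le_1) (simp_all add: proj_norm_sq_nonneg)
  then have "AE \<omega> in M. \<not> \<sigma>\<^sup>2 * x < proj_norm_sq G (noise \<omega>)"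
    by eventually_elim (simp add: True)
  then have "prob {\<omega>\<in>space M. \<sigma>\<^sup>2 * x < proj_norm_sq G (noise \<omega>)} = 0"
    by (simp add: emeasure_eq_0_AE measure_def)
  then show ?thesis by simp
next
  case False
  define s where "s = 1 / (3 * \<sigma>\<^sup>2)"
  have s: "0 < s" "\<sigma>\<^sup>2 * s = 1 / 3" "s * (\<sigma>\<^sup>2 * x) = x / 3"
    using False by (simp_all add: s_def)
  have dim_le: "sqrt 3 ^ dim (span G) \<le> sqrt 3 ^ card G"
    by (intro power_increasing) (simp_all add: dim_span dim_le_card' assms(1))
  have "emeasure M {\<omega>\<in>space M. \<sigma>\<^sup>2 * x < proj_norm_sq G (noise \<omega>)}
      \<le> emeasure M {\<omega>\<in>space M. \<sigma>\<^sup>2 * x \<le> proj_norm_sq G (noise \<omega>)}"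
    by (intro emeasure_mono) auto
  also have "\<dots> \<le> ennreal (exp (- s * (\<sigma>\<^sup>2 * x)))
      * (\<integral>\<^sup>+\<omega>. ennreal (exp (s * proj_norm_sq G (noise \<omega>))) * indicator (space M) \<omega> \<partial>M)"
    by (rule Chernoff_ineq_nn_integral_ge[OF s(1)]) simp_all
  also have "\<dots> = ennreal (exp (- x / 3)) * (\<integral>\<^sup>+\<omega>. ennreal (exp (s * proj_norm_sq G (noise \<omega>))) \<partial>M)"
    by (simp add: s(3) cong: nn_integral_cong)
  also have "\<dots> \<le> ennreal (exp (- x / 3)) * ennreal ((1 / sqrt (1 - 2 / 3)) ^ dim (span G))"
    using nn_integral_exp_proj_norm_sq_noise_le[of s G] s(1,2) by (intro mult_left_mono) simp_all
  also have "\<dots> \<le> ennreal (sqrt 3 ^ card G * exp (- x / 3))"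
    using dim_le by (simp add: real_sqrt_divide ennreal_mult'[symmetric] mult.commute ennreal_leI)
  finally show ?thesis
    by (simp add: emeasure_eq_measure)
qed

lemma prob_union_proj_norm_sq_noise_gt:
  fixes V :: "'p::finite set \<Rightarrow> (real^'n) set" and cl :: "'p set \<Rightarrow> ereal"
  assumes cl: "coding_length cl" and V: "\<And>F. finite (V F)" "\<And>F. card (V F) \<le> card F + 1"
    and L: "0 \<le> L"
  shows "prob (\<Union>F\<in>{F. cl F \<noteq> \<infinity>}. {\<omega>\<in>space M. \<sigma>\<^sup>2 * (7.4 * (real (card F) + real_of_ereal (cl F))
      + 3.5 * L) < proj_norm_sq (V F) (noise \<omega>)}) \<le> exp (- L) * (sqrt 3 + 1)"
    (is "prob (\<Union>F\<in>?S. ?bad F) \<le> _")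
proof -
  define r where "r F = real_of_ereal (cl F)" for F
  have r: "0 \<le> r F" for F
    using cl by (simp add: r_def coding_length_def real_of_ereal_pos)
  have prob_bad: "prob (?bad F) \<le> exp (- L) * (if card F = 0 then sqrt 3 else 2 powr (- r F))" for F
  proof -
    have "prob (?bad F) \<le> sqrt 3 ^ card (V F) * exp (- (7.4 * (real (card F) + r F) + 3.5 * L) / 3)"
      unfolding r_def using r[of F] L by (intro prob_proj_norm_sq_noise_gt V) (simp add: r_def)
    also have "\<dots> \<le> sqrt 3 ^ (card F + 1) * exp (- (7.4 * (real (card F) + r F) + 3.5 * L) / 3)"
      using V(2) by (intro mult_right_mono power_increasing) auto
    also have "\<dots> \<le> exp (- L) * (if card F = 0 then sqrt 3 else 2 powr (- r F))"
      by (rule tail_weight_le[OF r L])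
    finally show ?thesis .
  qed
  have "prob (\<Union>F\<in>?S. ?bad F) \<le> (\<Sum>F\<in>?S. prob (?bad F))"
    by (intro finite_measure_subadditive_finite) auto
  also have "\<dots> \<le> (\<Sum>F\<in>?S. exp (- L) * (if card F = 0 then sqrt 3 else 2 powr (- r F)))"
    by (rule sum_mono) (rule prob_bad)
  also have "\<dots> = exp (- L) * (\<Sum>F\<in>?S. if card F = 0 then sqrt 3 else 2 powr (- r F))"
    by (simp add: sum_distrib_left)
  also have "\<dots> \<le> exp (- L) * (sqrt 3 + 1)"
    using sum_coding_weights_le[OF cl] unfolding r_def by (intro mult_left_mono) simp_all
  finally show ?thesis .
qed

lemma exists_event_proj_norm_sq_noise_le:
  fixes V :: "'p::finite set \<Rightarrow> (real^'n) set" and cl :: "'p set \<Rightarrow> ereal"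
  assumes cl: "coding_length cl" and V: "\<And>F. finite (V F)" "\<And>F. card (V F) \<le> card F + 1"
    and \<eta>: "0 < \<eta>" "\<eta> < 1"
  shows "\<exists>A\<in>sets M. prob A > 1 - \<eta> \<and> (\<forall>\<omega>\<in>A.
     (\<forall>F. cl F \<noteq> \<infinity> \<longrightarrow> proj_norm_sq (V F) (noise \<omega>)
        \<le> \<sigma>\<^sup>2 * (7.4 * (real (card F) + real_of_ereal (cl F)) + 3.5 * ln (6 / \<eta>))) \<and>
     proj_norm_sq {w} (noise \<omega>) \<le> \<sigma>\<^sup>2 * (3 * ln (6 / \<eta>)))"
proof -
  define L where "L = ln (6 / \<eta>)"
  have L: "0 \<le> L" "exp (- L) = \<eta> / 6"
    using \<eta> by (simp_all add: L_def exp_minus)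
  define U where "U = (\<Union>F\<in>{F. cl F \<noteq> \<infinity>}. {\<omega>\<in>space M. \<sigma>\<^sup>2 * (7.4 * (real (card F)
      + real_of_ereal (cl F)) + 3.5 * L) < proj_norm_sq (V F) (noise \<omega>)})
    \<union> {\<omega>\<in>space M. \<sigma>\<^sup>2 * (3 * L) < proj_norm_sq {w} (noise \<omega>)}"
  have U_measurable[measurable]: "U \<in> sets M"
    by (simp add: U_def)
  have "prob {\<omega>\<in>space M. \<sigma>\<^sup>2 * (3 * L) < proj_norm_sq {w} (noise \<omega>)} \<le> sqrt 3 ^ card {w} * exp (- (3 * L) / 3)"
    using L(1) by (intro prob_proj_norm_sq_noise_gt) simp_all
  then have "prob U \<le> exp (- L) * (sqrt 3 + 1) + sqrt 3 * exp (- L)"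
    unfolding U_def using prob_union_proj_norm_sq_noise_gt[OF cl V L(1)]
    by (intro order_trans[OF measure_Un_le] add_mono) auto
  also have "\<dots> = \<eta> / 6 * (2 * sqrt 3 + 1)"
    by (simp add: L(2) field_simps)
  also have "\<dots> < \<eta>"
    using \<eta> sqrt_3_less_2 by simp
  finally have "prob (space M - U) > 1 - \<eta>"
    by (simp add: prob_compl)
  moreover have "\<forall>\<omega>\<in>space M - U.
     (\<forall>F. cl F \<noteq> \<infinity> \<longrightarrow> proj_norm_sq (V F) (noise \<omega>)
        \<le> \<sigma>\<^sup>2 * (7.4 * (real (card F) + real_of_ereal (cl F)) + 3.5 * ln (6 / \<eta>))) \<and>
     proj_norm_sq {w} (noise \<omega>) \<le> \<sigma>\<^sup>2 * (3 * ln (6 / \<eta>))"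
    unfolding U_def L_def by (auto simp: not_less)
  ultimately show ?thesis
    by (intro bexI[of _ "space M - U"]) auto
qed

end

lemma cc_attained: "\<exists>F. supp \<beta> \<subseteq> F \<and> cc cl \<beta> = cc_set cl F"
proof -
  have "{cc_set cl F | F. supp \<beta> \<subseteq> F} = cc_set cl ` {F. supp \<beta> \<subseteq> F}" by auto
  then have "finite {cc_set cl F | F. supp \<beta> \<subseteq> F}" by simp
  from Min_in[OF this] show ?thesis unfolding cc_def by auto
qed

lemma cc_nonneg: "coding_length cl \<Longrightarrow> 0 \<le> cc cl \<beta>"
  using cc_attained[of \<beta> cl] by (auto simp: cc_set_def coding_length_def)

lemma cc_zero:
  assumes "coding_length cl"
  shows "cc cl 0 = 0"
proof -
  have "{cc_set cl F | F. supp 0 \<subseteq> F} = cc_set cl ` UNIV"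
    by (auto simp: supp_def)
  then have "cc cl 0 \<le> cc_set cl {}"
    unfolding cc_def by (intro Min_le) auto
  then show ?thesis
    using assms cc_nonneg[OF assms, of 0] by (simp add: cc_set_def coding_length_def)
qed

lemma cc_finite_witness:
  assumes "coding_length cl" "cc cl \<beta> \<noteq> \<infinity>"
  obtains F where "supp \<beta> \<subseteq> F" "cl F \<noteq> \<infinity>"
    "cc cl \<beta> = ereal (real (card F) + real_of_ereal (cl F))"
proof -
  obtain F where F: "supp \<beta> \<subseteq> F" "cc cl \<beta> = cc_set cl F" using cc_attained by blast
  then have "cl F \<noteq> \<infinity>" using assms(2) by (auto simp: cc_set_def)
  moreover have "0 \<le> cl F" using assms(1) by (simp add: coding_length_def)
  ultimately have "cl F = ereal (real_of_ereal (cl F))" by (cases "cl F") auto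
  then show ?thesis
    using that F \<open>cl F \<noteq> \<infinity>\<close> by (metis cc_set_def plus_ereal.simps(1))
qed

lemma mult_vec_in_span_columns:
  fixes X :: "real^'p::finite^'n::finite"
  assumes "supp \<beta> \<subseteq> F"
  shows "X *v \<beta> \<in> span ((\<lambda>j. column j X) ` F)"
proof -
  have "X *v \<beta> = (\<Sum>j\<in>UNIV. \<beta> $ j *\<^sub>R column j X)"
    by (simp add: matrix_mult_sum scalar_mult_eq_scaleR)
  also have "\<dots> = (\<Sum>j\<in>F. \<beta> $ j *\<^sub>R column j X)"
    using assms by (intro sum.mono_neutral_right) (auto simp: supp_def)
  also have "\<dots> \<in> span ((\<lambda>j. column j X) ` F)"
    by (intro span_sum span_mul span_base) auto
  finally show ?thesis .
qed

lemma card_insert_image_le: "finite F \<Longrightarrow> card (insert x (g ` F)) \<le> Suc (card F)"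
  using card_image_le[of F g] by (simp add: card_insert_if)

lemma two_mul_le_of_sq_le:
  fixes p D Z t :: real
  assumes "p\<^sup>2 \<le> D\<^sup>2 * Z" "0 \<le> D" "0 \<le> Z" "0 < t"
  shows "2 * p \<le> t * D\<^sup>2 + Z / t"
proof -
  have "p \<le> sqrt (D\<^sup>2 * Z)"
    using real_sqrt_le_mono[OF assms(1)] by (simp add: real_le_rsqrt)
  then have "p \<le> D * sqrt Z"
    using assms(2) by (simp add: real_sqrt_mult)
  moreover have "2 * D * sqrt Z \<le> t * D\<^sup>2 + (sqrt Z)\<^sup>2 / t"
  proof -
    have "0 \<le> (t * D - sqrt Z)\<^sup>2 / t" using assms(4) by simp
    then show ?thesis
      using assms(4) by (simp add: power2_eq_square field_simps)
  qed
  ultimately show ?thesis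
    using assms(3) by simp
qed

lemma oracle_arith_pos:
  fixes D Db p q Z Zb c cb l a \<sigma> L :: real
  assumes nonneg: "0 \<le> D" "0 \<le> Db" "0 \<le> Z" "0 \<le> Zb" "0 \<le> c"
    and basic: "D\<^sup>2 \<le> Db\<^sup>2 + l * cb - l * c + 2 * p - 2 * q"
    and p: "p\<^sup>2 \<le> D\<^sup>2 * Z" and q: "q\<^sup>2 \<le> Db\<^sup>2 * Zb"
    and Z: "Z \<le> \<sigma>\<^sup>2 * (7.4 * c + 3.5 * L)" and Zb: "Zb \<le> \<sigma>\<^sup>2 * (3 * L)"
    and a: "0 < a" and l: "7.4 * \<sigma>\<^sup>2 * (1 + a) / a \<le> l"
  shows "D\<^sup>2 \<le> (1 + a)\<^sup>2 * Db\<^sup>2 + (1 + a) * l * cb + \<sigma>\<^sup>2 * L * (10 + 3.5 * a + 6.5 / a)"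
proof -
  have p': "2 * p \<le> a / (1 + a) * D\<^sup>2 + Z * ((1 + a) / a)"
    using two_mul_le_of_sq_le[OF p nonneg(1,3), of "a / (1 + a)"] a by simp
  have q': "- 2 * q \<le> a * Db\<^sup>2 + Zb / a"
    using two_mul_le_of_sq_le[of "- q" Db Zb a] q nonneg(2,4) a by simp
  have "Z * ((1 + a) / a) \<le> \<sigma>\<^sup>2 * (7.4 * c + 3.5 * L) * ((1 + a) / a)"
    using a by (intro mult_right_mono[OF Z]) simp
  also have "\<dots> = (7.4 * \<sigma>\<^sup>2 * (1 + a) / a) * c + 3.5 * \<sigma>\<^sup>2 * L * ((1 + a) / a)"
    by (simp add: algebra_simps)
  also have "(7.4 * \<sigma>\<^sup>2 * (1 + a) / a) * c \<le> l * c"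
    using l nonneg(5) by (rule mult_right_mono)
  finally have Z': "Z * ((1 + a) / a) \<le> l * c + 3.5 * \<sigma>\<^sup>2 * L * ((1 + a) / a)"
    by simp
  have Zb': "Zb / a \<le> 3 * \<sigma>\<^sup>2 * L / a"
    using Zb a by (simp add: divide_right_mono mult_ac)
  have "D\<^sup>2 * (1 - a / (1 + a)) \<le> (1 + a) * Db\<^sup>2 + l * cb
      + 3.5 * \<sigma>\<^sup>2 * L * ((1 + a) / a) + 3 * \<sigma>\<^sup>2 * L / a"
    using basic p' q' Z' Zb' by (simp add: algebra_simps)
  moreover have "1 - a / (1 + a) = 1 / (1 + a)" using a by (simp add: field_simps)
  ultimately have "D\<^sup>2 \<le> (1 + a) * ((1 + a) * Db\<^sup>2 + l * cb
      + 3.5 * \<sigma>\<^sup>2 * L * ((1 + a) / a) + 3 * \<sigma>\<^sup>2 * L / a)"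
    using a by (simp add: field_simps)
  also have "\<dots> = (1 + a)\<^sup>2 * Db\<^sup>2 + (1 + a) * l * cb + \<sigma>\<^sup>2 * L * (10 + 3.5 * a + 6.5 / a)"
    using a by (simp add: field_simps power2_eq_square)
  finally show ?thesis .
qed

lemma oracle_arith:
  fixes D Db p q Z Zb c cb l a \<sigma> L :: real
  assumes nonneg: "0 \<le> D" "0 \<le> Db" "0 \<le> Z" "0 \<le> Zb" "0 \<le> c" "0 \<le> L"
    and basic: "D\<^sup>2 \<le> Db\<^sup>2 + l * cb - l * c + 2 * p - 2 * q"
    and p: "p\<^sup>2 \<le> D\<^sup>2 * Z" and q: "q\<^sup>2 \<le> Db\<^sup>2 * Zb"
    and Z: "Z \<le> \<sigma>\<^sup>2 * (7.4 * c + 3.5 * L)" and Zb: "Zb \<le> \<sigma>\<^sup>2 * (3 * L)"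
    and l: "7.4 * \<sigma>\<^sup>2 < l" and a: "7.4 * \<sigma>\<^sup>2 / (l - 7.4 * \<sigma>\<^sup>2) \<le> a"
  shows "D\<^sup>2 \<le> (1 + a)\<^sup>2 * Db\<^sup>2 + (1 + a) * l * cb + \<sigma>\<^sup>2 * (10 + 5 * a + 7 * inverse a) * L"
proof -
  have l_pos: "0 < l - 7.4 * \<sigma>\<^sup>2" using l by simp
  have "0 \<le> 7.4 * \<sigma>\<^sup>2 / (l - 7.4 * \<sigma>\<^sup>2)" using l_pos by simp
  then have a_nonneg: "0 \<le> a" using a by linarith
  have a_l: "7.4 * \<sigma>\<^sup>2 \<le> a * (l - 7.4 * \<sigma>\<^sup>2)" using a by (simp only: pos_divide_le_eq[OF l_pos])
  show ?thesis
  proof (cases "a = 0")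
    case True
    \<comment> \<open>then \<open>\<sigma> = 0\<close>, and \<open>inverse 0 = 0\<close> leaves only the deterministic bound\<close>
    then have "\<sigma>\<^sup>2 = 0" using a_l by simp
    then have "p = 0" "q = 0" using p q Z Zb nonneg by auto
    moreover have "0 \<le> l * c" using l nonneg(5) \<open>\<sigma>\<^sup>2 = 0\<close> by simp
    ultimately show ?thesis
      using basic True \<open>\<sigma>\<^sup>2 = 0\<close> by simp
  next
    case False
    then have a_pos: "0 < a" using a_nonneg by simp
    have "7.4 * \<sigma>\<^sup>2 * (1 + a) / a \<le> l"
      using a_l a_pos by (simp add: divide_le_eq algebra_simps)
    with a_pos have "D\<^sup>2 \<le> (1 + a)\<^sup>2 * Db\<^sup>2 + (1 + a) * l * cb + \<sigma>\<^sup>2 * L * (10 + 3.5 * a + 6.5 / a)"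
      by (intro oracle_arith_pos[OF nonneg(1-5) basic p q Z Zb])
    also have "\<sigma>\<^sup>2 * L * (10 + 3.5 * a + 6.5 / a) \<le> \<sigma>\<^sup>2 * L * (10 + 5 * a + 7 * inverse a)"
      using a_pos nonneg(6) by (intro mult_left_mono) (simp_all add: field_simps)
    finally show ?thesis by (simp add: mult_ac)
  qed
qed

lemma fitted_oracle_inequality:
  fixes u u' f v :: "'a::euclidean_space"
  assumes basic: "(norm (u - (f + v)))\<^sup>2 + l * c \<le> (norm (u' - (f + v)))\<^sup>2 + l * c'"
    and span: "u - f \<in> span G"
    and energy: "proj_norm_sq G v \<le> \<sigma>\<^sup>2 * (7.4 * c + 3.5 * L)"
    and energy': "proj_norm_sq {u' - f} v \<le> \<sigma>\<^sup>2 * (3 * L)"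
    and "0 \<le> c" "0 \<le> L" "7.4 * \<sigma>\<^sup>2 < l" "7.4 * \<sigma>\<^sup>2 / (l - 7.4 * \<sigma>\<^sup>2) \<le> a"
  shows "(norm (u - f))\<^sup>2 \<le> (1 + a)\<^sup>2 * (norm (u' - f))\<^sup>2 + (1 + a) * l * c'
           + \<sigma>\<^sup>2 * (10 + 5 * a + 7 * inverse a) * L"
proof (rule oracle_arith)
  have "(norm (w - (f + v)))\<^sup>2 = (norm (w - f))\<^sup>2 - 2 * (v \<bullet> (w - f)) + (norm v)\<^sup>2" for w
    by (simp add: power2_norm_eq_inner inner_diff_left inner_diff_right inner_add_left
        inner_add_right inner_commute)
  then show "(norm (u - f))\<^sup>2 \<le> (norm (u' - f))\<^sup>2 + l * c' - l * c + 2 * (v \<bullet> (u - f)) - 2 * (v \<bullet> (u' - f))"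
    using basic by simp
  show "(v \<bullet> (u - f))\<^sup>2 \<le> (norm (u - f))\<^sup>2 * proj_norm_sq G v"
    using span by (rule inner_sq_le_proj_norm_sq)
  show "(v \<bullet> (u' - f))\<^sup>2 \<le> (norm (u' - f))\<^sup>2 * proj_norm_sq {u' - f} v"
    by (rule inner_sq_le_proj_norm_sq) (simp add: span_base)
qed (use assms in \<open>simp_all add: proj_norm_sq_nonneg\<close>)

lemma penalized_oracle_inequality:
  fixes X :: "real^'p::finite^'n::finite" and cl :: "'p set \<Rightarrow> ereal"
  assumes cl: "coding_length cl"
    and minimizer: "\<And>\<beta>. ereal (Qhat X (f + v) \<beta>\<^sub>h) + ereal l * cc cl \<beta>\<^sub>h
          \<le> ereal (Qhat X (f + v) \<beta>) + ereal l * cc cl \<beta>"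
    and energy: "\<And>F. cl F \<noteq> \<infinity> \<Longrightarrow> proj_norm_sq (insert f ((\<lambda>j. column j X) ` F)) v
          \<le> \<sigma>\<^sup>2 * (7.4 * (real (card F) + real_of_ereal (cl F)) + 3.5 * L)"
    and energy': "proj_norm_sq {X *v \<beta> - f} v \<le> \<sigma>\<^sup>2 * (3 * L)"
    and L: "0 \<le> L" and l: "7.4 * \<sigma>\<^sup>2 < l" and a: "7.4 * \<sigma>\<^sup>2 / (l - 7.4 * \<sigma>\<^sup>2) \<le> a"
  shows "ereal ((norm (X *v \<beta>\<^sub>h - f))\<^sup>2)
     \<le> ereal ((1 + a)\<^sup>2 * (norm (X *v \<beta> - f))\<^sup>2) + ereal ((1 + a) * l) * cc cl \<beta>
        + ereal (\<sigma>\<^sup>2 * (10 + 5 * a + 7 * inverse a) * L)"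
proof -
  have l_pos: "0 < l" using l zero_le_power2[of \<sigma>] by linarith
  have "0 \<le> 7.4 * \<sigma>\<^sup>2 / (l - 7.4 * \<sigma>\<^sup>2)" using l by simp
  then have a_nonneg: "0 \<le> a" using a by linarith
  have "cc cl \<beta>\<^sub>h \<noteq> \<infinity>"
    using minimizer[of 0] l_pos by (auto simp: cc_zero[OF cl])
  then obtain F where F: "supp \<beta>\<^sub>h \<subseteq> F" "cl F \<noteq> \<infinity>"
    and cc_h: "cc cl \<beta>\<^sub>h = ereal (real (card F) + real_of_ereal (cl F))"
    using cc_finite_witness[OF cl] by blast
  show ?thesis
  proof (cases "cc cl \<beta>")
    case (real c')
    have "X *v \<beta>\<^sub>h - f \<in> span (insert f ((\<lambda>j. column j X) ` F))"
      using span_mono[OF subset_insertI] mult_vec_in_span_columns[OF F(1), of X]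
      by (intro span_diff) (auto intro: span_base)
    moreover have "0 \<le> real_of_ereal (cl F)"
      using cl by (simp add: coding_length_def real_of_ereal_pos)
    ultimately have "(norm (X *v \<beta>\<^sub>h - f))\<^sup>2 \<le> (1 + a)\<^sup>2 * (norm (X *v \<beta> - f))\<^sup>2 + (1 + a) * l * c'
        + \<sigma>\<^sup>2 * (10 + 5 * a + 7 * inverse a) * L"
      using minimizer[of \<beta>] energy[OF F(2)] energy' L l a
      by (intro fitted_oracle_inequality[where c = "real (card F) + real_of_ereal (cl F)"])
        (auto simp: Qhat_def cc_h real)
    then show ?thesis by (simp add: real mult.assoc)
  next
    case PInf
    then show ?thesis using a_nonneg l_pos by (simp add: add_pos_nonneg)
  next
    case MInf
    then show ?thesis using cc_nonneg[OF cl, of \<beta>] by simp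
  qed
qed

theorem theorem3:
  fixes M :: "'a measure"
    and X :: "real^'p::finite^'n::finite"
    and y :: "'a \<Rightarrow> real^'n"
    and \<sigma> \<eta> :: real
    and cl :: "'p set \<Rightarrow> ereal"
    and \<beta>pen :: "real \<Rightarrow> 'a \<Rightarrow> real^'p"
    and \<beta>bar :: "real^'p"
  assumes "prob_space M"
    and indep: "prob_space.indep_vars M (\<lambda>_. borel) (\<lambda>i \<omega>. y \<omega> $ i) UNIV"
    and integ: "\<And>i. integrable M (\<lambda>\<omega>. y \<omega> $ i)"
    and "\<sigma> \<ge> 0"
    and mgf_integ: "\<And>i t. integrable M
          (\<lambda>\<omega>. exp (t * (y \<omega> $ i - prob_space.expectation M (\<lambda>\<omega>'. y \<omega>' $ i))))"
    and subgauss: "\<And>i t. prob_space.expectation M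
          (\<lambda>\<omega>. exp (t * (y \<omega> $ i - prob_space.expectation M (\<lambda>\<omega>'. y \<omega>' $ i))))
          \<le> exp (\<sigma>\<^sup>2 * t\<^sup>2 / 2)"
    and "coding_length cl"
    and minimizer: "\<And>l \<omega> \<beta>. l > 0 \<Longrightarrow> \<omega> \<in> space M \<Longrightarrow>
          ereal (Qhat X (y \<omega>) (\<beta>pen l \<omega>)) + ereal l * cc cl (\<beta>pen l \<omega>)
          \<le> ereal (Qhat X (y \<omega>) \<beta>) + ereal l * cc cl \<beta>"
    and "0 < \<eta>" "\<eta> < 1"
  shows "\<exists>A \<in> sets M. prob_space.prob M A > 1 - \<eta> \<and>
     (\<forall>\<omega>\<in>A. \<forall>l > 7.4 * \<sigma>\<^sup>2. \<forall>a \<ge> 7.4 * \<sigma>\<^sup>2 / (l - 7.4 * \<sigma>\<^sup>2).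
        (let Ey = (\<chi> i. prob_space.expectation M (\<lambda>\<omega>'. y \<omega>' $ i)) in
         ereal ((norm (X *v \<beta>pen l \<omega> - Ey))\<^sup>2)
         \<le> ereal ((1 + a)\<^sup>2 * (norm (X *v \<beta>bar - Ey))\<^sup>2)
            + ereal ((1 + a) * l) * cc cl \<beta>bar
            + ereal (\<sigma>\<^sup>2 * (10 + 5 * a + 7 * inverse a) * ln (6 / \<eta>))))"
proof -
  interpret subgaussian_vector M y \<sigma>
    using assms by (simp add: subgaussian_vector_def subgaussian_vector_axioms_def)
  define V where "V F = insert mean ((\<lambda>j. column j X) ` F)" for F
  have V: "\<And>F. finite (V F)" "\<And>F. card (V F) \<le> card F + 1"
    by (simp_all add: V_def card_insert_image_le)
  obtain A where A: "A \<in> sets M" "prob A > 1 - \<eta>"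
    and energy: "\<And>\<omega>. \<omega> \<in> A \<Longrightarrow> (\<forall>F. cl F \<noteq> \<infinity> \<longrightarrow> proj_norm_sq (V F) (noise \<omega>)
        \<le> \<sigma>\<^sup>2 * (7.4 * (real (card F) + real_of_ereal (cl F)) + 3.5 * ln (6 / \<eta>))) \<and>
     proj_norm_sq {X *v \<beta>bar - mean} (noise \<omega>) \<le> \<sigma>\<^sup>2 * (3 * ln (6 / \<eta>))"
    using exists_event_proj_norm_sq_noise_le[OF \<open>coding_length cl\<close> V \<open>0 < \<eta>\<close> \<open>\<eta> < 1\<close>,
        where w = "X *v \<beta>bar - mean"] by blast
  have "ereal ((norm (X *v \<beta>pen l \<omega> - mean))\<^sup>2)
      \<le> ereal ((1 + a)\<^sup>2 * (norm (X *v \<beta>bar - mean))\<^sup>2) + ereal ((1 + a) * l) * cc cl \<beta>bar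
        + ereal (\<sigma>\<^sup>2 * (10 + 5 * a + 7 * inverse a) * ln (6 / \<eta>))"
    if \<omega>: "\<omega> \<in> A" and l: "7.4 * \<sigma>\<^sup>2 < l" and a: "7.4 * \<sigma>\<^sup>2 / (l - 7.4 * \<sigma>\<^sup>2) \<le> a"
    for \<omega> l a
  proof (rule penalized_oracle_inequality[OF \<open>coding_length cl\<close> _ _ _ _ l a])
    have "\<omega> \<in> space M" using \<omega> A(1) sets.sets_into_space by blast
    moreover have "0 < l" using l zero_le_power2[of \<sigma>] by linarith
    ultimately show "ereal (Qhat X (mean + noise \<omega>) (\<beta>pen l \<omega>)) + ereal l * cc cl (\<beta>pen l \<omega>)
        \<le> ereal (Qhat X (mean + noise \<omega>) \<beta>) + ereal l * cc cl \<beta>" for \<beta>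
      using minimizer by (simp add: noise_def)
    show "0 \<le> ln (6 / \<eta>)" using \<open>0 < \<eta>\<close> \<open>\<eta> < 1\<close> by simp
  qed (use energy[OF \<omega>] in \<open>simp_all add: V_def\<close>)
  then show ?thesis
    using A unfolding Let_def mean_def[symmetric] by blast
qed

end
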